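(* For $h\ge3$ the determinants satisfy $D_h-D_{h-1}+2z^3D_{h-2}-z^6D_{h-3}=0$. Moreover, with $z^3=t(1-t)^2$ and $W=\sqrt{4t-3t^2}$, for all $h\ge0$, \[ D_h=A r_1^h+Br_2^h+Cr_3^h, \] where $r_1=(t-1)^2$, $r_2=\tfrac t2(2-t+W)$, $r_3=\tfrac t2(2-t-W)$ are the roots of $X^3-X^2+2z^3X-z^6=0$, and \[ A=\frac{t-1}{3t-1},\qquad B=\frac{3t^2-4t-W}{(3t-1)(3t-4)},\qquad C=\frac{3t^2-4t+W}{(3t-1)(3t-4)}. \] (The identity holds as an identity of formal series in $t^{1/2}$, with $W=2t^{1/2}(1-3t/4)^{1/2}$.)
   Context: For $h\ge1$, $D_h=D_h(z)$ is the determinant of the $h\times h$ matrix $T_h$ (rows/columns indexed $0,\dots,h-1$) with entries $(T_h)_{p,p}=1$, $(T_h)_{p,p+1}=-2z$, $(T_h)_{p,p+2}=z^2$, $(T_h)_{p+1,p}=-z^2$, and all other entries $0$; $D_0=1$. (So $D_1=1$, $D_2=1-2z^3$.) *)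

theory Defs
  imports Complex_Main "Jordan_Normal_Form.Determinant"
begin

definition T_mat :: "nat \<Rightarrow> 'a::comm_ring_1 \<Rightarrow> 'a mat" where
  "T_mat h z = mat h h (\<lambda>(p, q).
      if q = p then 1
      else if q = p + 1 then - 2 * z
      else if q = p + 2 then z ^ 2
      else if p = q + 1 then - (z ^ 2)
      else 0)"

text \<open>D_h(z) = det T_h(z); for h = 0 this is the determinant of the empty matrix, i.e. 1.\<close>
definition D :: "nat \<Rightarrow> 'a::comm_ring_1 \<Rightarrow> 'a" where
  "D h z = (if h = 0 then 1 else det (T_mat h z))"

end

theory Submission
  imports Defs
begin

text \<open>Expanding \<open>det T\<^sub>h\<close> along its last row, then the last row of the surviving minor, then
  the last column of the next one, gives the order-three recurrence, whose characteristic polynomial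
  is \<open>X\<^sup>3 - X\<^sup>2 + 2z\<^sup>3X - z\<^sup>6\<close>. The substitution \<open>z\<^sup>3 = t(1 - t)\<^sup>2\<close> makes \<open>(t - 1)\<^sup>2\<close> a root, and the
  remaining quadratic factor has discriminant \<open>t\<^sup>2W\<^sup>2\<close>; matching \<open>D\<^sub>0 = D\<^sub>1 = 1\<close> and
  \<open>D\<^sub>2 = 1 - 2z\<^sup>3\<close> then determines \<open>A, B, C\<close>.\<close>

lemma det_mat_Suc_last_row:
  fixes g :: "nat \<times> nat \<Rightarrow> 'a::comm_ring_1"
  shows "det (mat (Suc k) (Suc k) g) =
    (\<Sum>j<Suc k. g (k, j) * ((-1) ^ (k + j) *
        det (mat k k (\<lambda>(p, q). g (p, if q < j then q else Suc q)))))"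
proof -
  have "det (mat (Suc k) (Suc k) g) =
      (\<Sum>j<Suc k. mat (Suc k) (Suc k) g $$ (k, j) * cofactor (mat (Suc k) (Suc k) g) k j)"
    by (rule laplace_expansion_row) auto
  also have "\<dots> = (\<Sum>j<Suc k. g (k, j) * ((-1) ^ (k + j) *
        det (mat k k (\<lambda>(p, q). g (p, if q < j then q else Suc q)))))"
  proof (rule sum.cong[OF refl])
    fix j assume j: "j \<in> {..<Suc k}"
    have "mat_delete (mat (Suc k) (Suc k) g) k j =
        mat k k (\<lambda>(p, q). g (p, if q < j then q else Suc q))"
      unfolding mat_delete_def using j by (intro eq_matI) auto
    then show "mat (Suc k) (Suc k) g $$ (k, j) * cofactor (mat (Suc k) (Suc k) g) k j =
        g (k, j) * ((-1) ^ (k + j) * det (mat k k (\<lambda>(p, q). g (p, if q < j then q else Suc q))))"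
      unfolding cofactor_def using j by auto
  qed
  finally show ?thesis .
qed

lemma det_mat_Suc_last_col:
  fixes g :: "nat \<times> nat \<Rightarrow> 'a::comm_ring_1"
  shows "det (mat (Suc k) (Suc k) g) =
    (\<Sum>i<Suc k. g (i, k) * ((-1) ^ (i + k) *
        det (mat k k (\<lambda>(p, q). g (if p < i then p else Suc p, q)))))"
proof -
  have "det (mat (Suc k) (Suc k) g) =
      (\<Sum>i<Suc k. mat (Suc k) (Suc k) g $$ (i, k) * cofactor (mat (Suc k) (Suc k) g) i k)"
    by (rule laplace_expansion_column) auto
  also have "\<dots> = (\<Sum>i<Suc k. g (i, k) * ((-1) ^ (i + k) *
        det (mat k k (\<lambda>(p, q). g (if p < i then p else Suc p, q)))))"
  proof (rule sum.cong[OF refl])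
    fix i assume i: "i \<in> {..<Suc k}"
    have "mat_delete (mat (Suc k) (Suc k) g) i k =
        mat k k (\<lambda>(p, q). g (if p < i then p else Suc p, q))"
      unfolding mat_delete_def using i by (intro eq_matI) auto
    then show "mat (Suc k) (Suc k) g $$ (i, k) * cofactor (mat (Suc k) (Suc k) g) i k =
        g (i, k) * ((-1) ^ (i + k) * det (mat k k (\<lambda>(p, q). g (if p < i then p else Suc p, q))))"
      unfolding cofactor_def using i by auto
  qed
  finally show ?thesis .
qed

lemma neg_one_power_double [simp]: "(-1 :: 'a::ring_1) ^ (n + n) = 1"
  by (rule neg_one_even_power) simp

lemma neg_one_power_Suc_double [simp]: "(-1 :: 'a::ring_1) ^ Suc (n + n) = -1"
  by (rule neg_one_odd_power) simp

lemma mat_cong: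
  assumes "\<And>p q. p < k \<Longrightarrow> q < k \<Longrightarrow> f (p, q) = g (p, q)"
  shows "mat k k f = mat k k g"
  using assms by (intro eq_matI) auto

definition T_entry :: "'a::comm_ring_1 \<Rightarrow> nat \<times> nat \<Rightarrow> 'a" where
  "T_entry z = (\<lambda>(p, q).
      if q = p then 1
      else if q = p + 1 then - 2 * z
      else if q = p + 2 then z ^ 2
      else if p = q + 1 then - (z ^ 2)
      else 0)"

lemma D_eq_det_mat: "D h z = det (mat h h (T_entry z))"
  unfolding D_def T_mat_def T_entry_def by (cases "h = 0") auto

lemma D_1: "D 1 z = 1"
  unfolding D_def T_mat_def by (simp add: det_mat_Suc_last_row[where k = 0, simplified])

lemma D_2: "D 2 (z::'a::comm_ring_1) = 1 - 2 * z ^ 3"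
proof -
  have "D 2 z = det (mat (Suc (Suc 0)) (Suc (Suc 0)) (T_entry z))"
    by (simp add: D_eq_det_mat eval_nat_numeral)
  also have "\<dots> = 1 - 2 * z ^ 3"
    unfolding det_mat_Suc_last_row[of "Suc 0"]
    by (simp add: det_mat_Suc_last_row[where k = 0, simplified] T_entry_def
        algebra_simps eval_nat_numeral)
  finally show ?thesis .
qed

lemma D_Suc_Suc_Suc:
  fixes z :: "'a::comm_ring_1"
  shows "D (n + 3) z = D (n + 2) z - 2 * z ^ 3 * D (n + 1) z + z ^ 6 * D n z"
proof -
  define M where "M = (\<lambda>(p, q). T_entry z (p, if q < Suc n then q else Suc q))"
  define N where "N = (\<lambda>(p, q). M (p, if q < n then q else Suc q))"
  \<comment> \<open>\<open>T\<close> is banded, so each expansion below keeps at most two nonzero terms.\<close>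
  have expand_T: "D (n + 3) z = z ^ 2 * det (mat (n + 2) (n + 2) M) + D (n + 2) z"
  proof -
    have "D (n + 3) z = det (mat (Suc (Suc (Suc n))) (Suc (Suc (Suc n))) (T_entry z))"
      by (simp add: D_eq_det_mat eval_nat_numeral)
    also have "\<dots> = T_entry z (Suc (Suc n), Suc n) * ((-1) ^ (Suc (Suc n) + Suc n) *
          det (mat (Suc (Suc n)) (Suc (Suc n)) M))
        + T_entry z (Suc (Suc n), Suc (Suc n)) * ((-1) ^ (Suc (Suc n) + Suc (Suc n)) *
          det (mat (Suc (Suc n)) (Suc (Suc n))
            (\<lambda>(p, q). T_entry z (p, if q < Suc (Suc n) then q else Suc q))))"
      unfolding det_mat_Suc_last_row[of "Suc (Suc n)"] M_def by (simp add: sum.neutral T_entry_def)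
    also have "mat (Suc (Suc n)) (Suc (Suc n))
          (\<lambda>(p, q). T_entry z (p, if q < Suc (Suc n) then q else Suc q))
        = mat (Suc (Suc n)) (Suc (Suc n)) (T_entry z)"
      by (rule mat_cong) auto
    finally show ?thesis
      by (simp add: D_eq_det_mat T_entry_def eval_nat_numeral)
  qed
  have expand_M: "det (mat (n + 2) (n + 2) M) = z ^ 2 * det (mat (Suc n) (Suc n) N) - 2 * z * D (n + 1) z"
  proof -
    have "det (mat (Suc (Suc n)) (Suc (Suc n)) M) =
        M (Suc n, n) * ((-1) ^ (Suc n + n) * det (mat (Suc n) (Suc n) N))
        + M (Suc n, Suc n) * ((-1) ^ (Suc n + Suc n) *
          det (mat (Suc n) (Suc n) (\<lambda>(p, q). M (p, if q < Suc n then q else Suc q))))"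
      unfolding det_mat_Suc_last_row[of "Suc n" M] N_def
      by (simp add: sum.neutral M_def T_entry_def)
    also have "mat (Suc n) (Suc n) (\<lambda>(p, q). M (p, if q < Suc n then q else Suc q))
        = mat (Suc n) (Suc n) (T_entry z)"
      by (rule mat_cong) (auto simp: M_def)
    finally show ?thesis
      by (simp add: D_eq_det_mat M_def T_entry_def eval_nat_numeral)
  qed
  have expand_N: "det (mat (Suc n) (Suc n) N) = z ^ 2 * D n z"
  proof -
    have "det (mat (Suc n) (Suc n) N) = N (n, n) * ((-1) ^ (n + n) *
        det (mat n n (\<lambda>(p, q). N (if p < n then p else Suc p, q))))"
      unfolding det_mat_Suc_last_col[of n] by (simp add: sum.neutral N_def M_def T_entry_def)
    also have "mat n n (\<lambda>(p, q). N (if p < n then p else Suc p, q)) = mat n n (T_entry z)"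
      by (rule mat_cong) (auto simp: N_def M_def)
    finally show ?thesis
      by (simp add: D_eq_det_mat N_def M_def T_entry_def)
  qed
  show ?thesis
    unfolding expand_T expand_M expand_N by (simp add: algebra_simps eval_nat_numeral)
qed

lemma recurrence_3_unique:
  fixes f g :: "nat \<Rightarrow> 'a::comm_ring_1"
  assumes f: "\<And>n. f (n + 3) = a * f (n + 2) + b * f (n + 1) + c * f n"
    and g: "\<And>n. g (n + 3) = a * g (n + 2) + b * g (n + 1) + c * g n"
    and "f 0 = g 0" "f 1 = g 1" "f 2 = g 2"
  shows "f n = g n"
proof (induction n rule: less_induct)
  case (less n)
  show ?case
  proof (cases "n < 3")
    case True
    then consider "n = 0" | "n = 1" | "n = 2" by linarith
    then show ?thesis by cases (use assms in simp_all)
  next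
    case False
    then obtain m where "n = m + 3" by (metis add.commute le_Suc_ex not_less)
    then show ?thesis using f[of m] g[of m] less.IH[of m] less.IH[of "m + 1"] less.IH[of "m + 2"]
      by simp
  qed
qed

lemma power_recurrence_3:
  fixes r :: "'a::comm_ring_1"
  assumes "r ^ 3 = a * r ^ 2 + b * r + c"
  shows "r ^ (n + 3) = a * r ^ (n + 2) + b * r ^ (n + 1) + c * r ^ n"
proof -
  have "r ^ (n + 3) = r ^ n * r ^ 3" by (simp add: power_add)
  also have "\<dots> = r ^ n * (a * r ^ 2 + b * r + c)" using assms by simp
  finally show ?thesis by (simp add: power_add power2_eq_square algebra_simps)
qed

lemma D_eq_power_sum:
  fixes z :: "'a::comm_ring_1"
  assumes roots: "\<forall>r \<in> {r1, r2, r3}. r ^ 3 - r ^ 2 + 2 * z ^ 3 * r - z ^ 6 = 0"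
    and "A + B + C = 1" "A * r1 + B * r2 + C * r3 = 1"
    and "A * r1 ^ 2 + B * r2 ^ 2 + C * r3 ^ 2 = 1 - 2 * z ^ 3"
  shows "D h z = A * r1 ^ h + B * r2 ^ h + C * r3 ^ h"
proof (rule recurrence_3_unique[where a = 1 and b = "- 2 * z ^ 3" and c = "z ^ 6"])
  show "D (n + 3) z = 1 * D (n + 2) z + - 2 * z ^ 3 * D (n + 1) z + z ^ 6 * D n z" for n
    using D_Suc_Suc_Suc[of n z] by simp
  have power_rec: "r ^ (n + 3) = 1 * r ^ (n + 2) + - 2 * z ^ 3 * r ^ (n + 1) + z ^ 6 * r ^ n"
    if "r \<in> {r1, r2, r3}" for r n
  proof (rule power_recurrence_3)
    have "r ^ 3 - r ^ 2 + 2 * z ^ 3 * r - z ^ 6 = 0" using roots that by blast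
    then show "r ^ 3 = 1 * r ^ 2 + - 2 * z ^ 3 * r + z ^ 6"
      by (simp add: eq_iff_diff_eq_0[of "r ^ 3"] algebra_simps)
  qed
  show "A * r1 ^ (n + 3) + B * r2 ^ (n + 3) + C * r3 ^ (n + 3) =
      1 * (A * r1 ^ (n + 2) + B * r2 ^ (n + 2) + C * r3 ^ (n + 2))
      + - 2 * z ^ 3 * (A * r1 ^ (n + 1) + B * r2 ^ (n + 1) + C * r3 ^ (n + 1))
      + z ^ 6 * (A * r1 ^ n + B * r2 ^ n + C * r3 ^ n)" for n
    by (simp only: power_rec insert_iff simp_thms) (simp add: algebra_simps)
qed (use assms D_1 D_2 in \<open>simp_all add: D_def\<close>)

lemma characteristic_roots:
  fixes t W z :: "'a::field_char_0"
  assumes z: "z ^ 3 = t * (1 - t) ^ 2" and W: "W ^ 2 = 4 * t - 3 * t ^ 2"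
  shows "\<forall>r \<in> {(t - 1) ^ 2, t / 2 * (2 - t + W), t / 2 * (2 - t - W)}.
           r ^ 3 - r ^ 2 + 2 * z ^ 3 * r - z ^ 6 = 0"
proof -
  define s where "s = t * (1 - t) ^ 2"
  have "z ^ 6 = (z ^ 3) ^ 2" by (simp flip: power_mult)
  then have z6: "z ^ 6 = s ^ 2" using z by (simp add: s_def)
  \<comment> \<open>\<open>HOL-Algebra.Ring\<close>, imported via \<open>Jordan_Normal_Form\<close>, shadows the method \<open>algebra\<close>.\<close>
  have root_linear: "r ^ 3 - r ^ 2 + 2 * s * r - s ^ 2 = 0" if "r = (t - 1) ^ 2" for r
    using that unfolding s_def by Groebner_Basis.algebra
  have root_quadratic: "r ^ 3 - r ^ 2 + 2 * s * r - s ^ 2 = 0"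
    if "2 * r = t * (2 - t + e * W)" and "e ^ 2 = 1" for r e
    using that W unfolding s_def by Groebner_Basis.algebra
  show ?thesis
    unfolding z6 z[folded s_def]
    using root_linear root_quadratic[of "t / 2 * (2 - t + W)" 1]
      root_quadratic[of "t / 2 * (2 - t - W)" "-1"]
    by simp
qed

lemma initial_values:
  fixes t W :: "'a::field_char_0"
  assumes W: "W ^ 2 = 4 * t - 3 * t ^ 2" and t1: "3 * t \<noteq> 1" and t4: "3 * t \<noteq> 4"
  defines "A \<equiv> (t - 1) / (3 * t - 1)"
    and "B \<equiv> (3 * t ^ 2 - 4 * t - W) / ((3 * t - 1) * (3 * t - 4))"
    and "C \<equiv> (3 * t ^ 2 - 4 * t + W) / ((3 * t - 1) * (3 * t - 4))"
    and "r1 \<equiv> (t - 1) ^ 2" and "r2 \<equiv> t / 2 * (2 - t + W)" and "r3 \<equiv> t / 2 * (2 - t - W)"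
  shows "A + B + C = 1" and "A * r1 + B * r2 + C * r3 = 1"
    and "A * r1 ^ 2 + B * r2 ^ 2 + C * r3 ^ 2 = 1 - 2 * (t * (1 - t) ^ 2)"
proof -
  define d where "d = (3 * t - 1) * (3 * t - 4)"
  have "d \<noteq> 0" using t1 t4 by (simp add: d_def)
  have A: "A = (t - 1) * (3 * t - 4) / d" using t4 by (simp add: A_def d_def)
  have combine: "A * x + B * y + C * w = s"
    if "(t - 1) * (3 * t - 4) * x + (3 * t ^ 2 - 4 * t - W) * y + (3 * t ^ 2 - 4 * t + W) * w = s * d"
    for x y w s
    using that \<open>d \<noteq> 0\<close> unfolding A B_def C_def d_def[symmetric]
    by (simp add: add_divide_distrib[symmetric] divide_eq_eq)
  have r: "2 * r2 = t * (2 - t + W)" "2 * r3 = t * (2 - t - W)"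
    by (simp_all add: r2_def r3_def)
  show "A + B + C = 1"
    using combine[of 1 1 1 1] unfolding d_def by (simp add: algebra_simps power2_eq_square)
  show "A * r1 + B * r2 + C * r3 = 1"
    by (rule combine) (use W r in \<open>unfold d_def r1_def, Groebner_Basis.algebra\<close>)
  show "A * r1 ^ 2 + B * r2 ^ 2 + C * r3 ^ 2 = 1 - 2 * (t * (1 - t) ^ 2)"
    by (rule combine) (use W r in \<open>unfold d_def r1_def, Groebner_Basis.algebra\<close>)
qed

theorem mainTheorem3:
  shows "(\<forall>(z::complex) h. h \<ge> 3 \<longrightarrow>
            D h z - D (h - 1) z + 2 * z ^ 3 * D (h - 2) z - z ^ 6 * D (h - 3) z = 0)
    \<and> (\<forall>(t::complex) (W::complex) (z::complex).
          z ^ 3 = t * (1 - t) ^ 2 \<longrightarrow> W ^ 2 = 4 * t - 3 * t ^ 2 \<longrightarrow>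
          3 * t \<noteq> 1 \<longrightarrow> 3 * t \<noteq> 4 \<longrightarrow>
          (let r1 = (t - 1) ^ 2;
               r2 = t / 2 * (2 - t + W);
               r3 = t / 2 * (2 - t - W);
               A = (t - 1) / (3 * t - 1);
               B = (3 * t ^ 2 - 4 * t - W) / ((3 * t - 1) * (3 * t - 4));
               C = (3 * t ^ 2 - 4 * t + W) / ((3 * t - 1) * (3 * t - 4))
           in (\<forall>r \<in> {r1, r2, r3}. r ^ 3 - r ^ 2 + 2 * z ^ 3 * r - z ^ 6 = 0)
              \<and> (\<forall>h. D h z = A * r1 ^ h + B * r2 ^ h + C * r3 ^ h)))"
proof (intro conjI allI impI)
  fix z :: complex and h :: nat
  assume "h \<ge> 3"
  then obtain n where h: "h = n + 3" by (metis add.commute le_Suc_ex)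
  show "D h z - D (h - 1) z + 2 * z ^ 3 * D (h - 2) z - z ^ 6 * D (h - 3) z = 0"
    unfolding h using D_Suc_Suc_Suc[of n z] by (simp add: eval_nat_numeral)
next
  fix t W z :: complex
  assume z: "z ^ 3 = t * (1 - t) ^ 2" and W: "W ^ 2 = 4 * t - 3 * t ^ 2"
    and "3 * t \<noteq> 1" "3 * t \<noteq> 4"
  note roots = characteristic_roots[OF z W]
  note init = initial_values[OF W \<open>3 * t \<noteq> 1\<close> \<open>3 * t \<noteq> 4\<close>, folded z]
  show "let r1 = (t - 1) ^ 2; r2 = t / 2 * (2 - t + W); r3 = t / 2 * (2 - t - W);
         A = (t - 1) / (3 * t - 1);
         B = (3 * t ^ 2 - 4 * t - W) / ((3 * t - 1) * (3 * t - 4));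
         C = (3 * t ^ 2 - 4 * t + W) / ((3 * t - 1) * (3 * t - 4))
       in (\<forall>r \<in> {r1, r2, r3}. r ^ 3 - r ^ 2 + 2 * z ^ 3 * r - z ^ 6 = 0)
          \<and> (\<forall>h. D h z = A * r1 ^ h + B * r2 ^ h + C * r3 ^ h)"
    unfolding Let_def using roots D_eq_power_sum[OF roots init] by blast
qed

end
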